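(* Let $G$ be a simple connected graph and let $v$ be an eigenvector of $\mathcal M$ with $\mathcal Mv=\mu v$, $\mu>0$, $\|v\|_2=1$. Let $S=\{i: v_i\ge0\}$. If $$\mu>\frac{(\mathrm{vol}\, S)^2+(\mathrm{vol}\, \bar S)^2}{\mathrm{vol}\, V}\,\max_{i\in V}\frac{v_i^2}{d_i},$$ then $Q(S)>0$.
   Context: $G=(V,E)$ is a finite, undirected, unweighted, simple connected graph with adjacency matrix $A$, degrees $d_i$, $D=\mathrm{Diag}(d_i)$, $\delta=(\sqrt{d_i})_i$, $\mathrm{vol}\, S=\sum_{i\in S}d_i$, $\bar S=V\setminus S$, $\mathbb 1_S$ the characteristic vector of $S$. $\mathcal M=D^{-1/2}AD^{-1/2}-\frac{1}{\mathrm{vol}\, V}\delta\delta^{\mathsf T}$. The modularity of $S$ is $Q(S)=\mathbb 1_S^{\mathsf T}A\mathbb 1_S-(\mathrm{vol}\, S)^2/\mathrm{vol}\, V$. *)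

theory Defs
  imports Main "HOL-Library.Extended_Nat" Complex_Main
begin

definition simple_graph :: "'a set \<Rightarrow> ('a \<Rightarrow> 'a \<Rightarrow> bool) \<Rightarrow> bool" where
  "simple_graph V E \<longleftrightarrow> finite V \<and> V \<noteq> {} \<and>
     (\<forall>x y. E x y \<longrightarrow> x \<in> V \<and> y \<in> V) \<and>
     (\<forall>x y. E x y \<longrightarrow> E y x) \<and> (\<forall>x. \<not> E x x)"

definition connected_graph :: "'a set \<Rightarrow> ('a \<Rightarrow> 'a \<Rightarrow> bool) \<Rightarrow> bool" where
  "connected_graph V E \<longleftrightarrow> simple_graph V E \<and> (\<forall>x\<in>V. \<forall>y\<in>V. E\<^sup>*\<^sup>* x y)"

definition adj :: "('a \<Rightarrow> 'a \<Rightarrow> bool) \<Rightarrow> 'a \<Rightarrow> 'a \<Rightarrow> real" where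
  "adj E i j = (if E i j then 1 else 0)"

definition deg :: "'a set \<Rightarrow> ('a \<Rightarrow> 'a \<Rightarrow> bool) \<Rightarrow> 'a \<Rightarrow> real" where
  "deg V E i = (\<Sum>j\<in>V. adj E i j)"

definition vol :: "'a set \<Rightarrow> ('a \<Rightarrow> 'a \<Rightarrow> bool) \<Rightarrow> 'a set \<Rightarrow> real" where
  "vol V E S = (\<Sum>i\<in>S. deg V E i)"

text \<open>The matrix M = D^{-1/2} A D^{-1/2} - (1 / vol V) delta delta^T, delta_i = sqrt d_i.\<close>
definition modmat :: "'a set \<Rightarrow> ('a \<Rightarrow> 'a \<Rightarrow> bool) \<Rightarrow> 'a \<Rightarrow> 'a \<Rightarrow> real" where
  "modmat V E i j = adj E i j / (sqrt (deg V E i) * sqrt (deg V E j))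
      - sqrt (deg V E i) * sqrt (deg V E j) / vol V E V"

definition modularity :: "'a set \<Rightarrow> ('a \<Rightarrow> 'a \<Rightarrow> bool) \<Rightarrow> 'a set \<Rightarrow> real" where
  "modularity V E S = (\<Sum>i\<in>S. \<Sum>j\<in>S. adj E i j) - (vol V E S)^2 / vol V E V"

end

theory Submission
  imports Defs
begin

text \<open>Since \<open>\<delta>\<close> is a null vector of the symmetric matrix \<open>\<M>\<close>, an eigenvector with
  \<open>\<mu> > 0\<close> is orthogonal to \<open>\<delta>\<close> and hence an eigenvector of the normalized adjacency
  matrix \<open>D^(-1/2) A D^(-1/2)\<close>. Multiplying its eigen-equation at \<open>i\<close> by \<open>v i\<close> and
  summing over \<open>i \<in> S\<close>, the terms across the cut are \<open>\<le> 0\<close> and each term inside \<open>S\<close>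
  is at most \<open>m = max v\<^sub>i\<^sup>2/d\<^sub>i\<close> per edge; so \<open>\<mu> \<Sum>\<^sub>S v\<^sub>i\<^sup>2 \<le> m e(S)\<close> with
  \<open>e(S) = 1\<^sub>S\<^sup>T A 1\<^sub>S\<close>, and likewise for the complement. Adding gives \<open>\<mu> \<le> m (e(S) + e(S\<^sup>c))\<close>.
  On the other hand \<open>Q(S) = Q(S\<^sup>c)\<close>, so \<open>2 Q(S) = e(S) + e(S\<^sup>c) - ((vol S)\<^sup>2 + (vol S\<^sup>c)\<^sup>2)/vol V\<close>,
  which is positive by the hypothesis on \<open>\<mu>\<close>.\<close>

definition norm_adj :: "'a set \<Rightarrow> ('a \<Rightarrow> 'a \<Rightarrow> bool) \<Rightarrow> 'a \<Rightarrow> 'a \<Rightarrow> real" where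
  "norm_adj V E i j = adj E i j / (sqrt (deg V E i) * sqrt (deg V E j))"

lemma adj_nonneg: "adj E i j \<ge> 0"
  by (simp add: adj_def)

lemma adj_sym: "simple_graph V E \<Longrightarrow> adj E i j = adj E j i"
  unfolding adj_def simple_graph_def by metis

lemma deg_nonneg: "deg V E i \<ge> 0"
  unfolding deg_def by (simp add: sum_nonneg adj_nonneg)

lemma deg_ge_1:
  assumes "simple_graph V E" "E i j"
  shows "deg V E i \<ge> 1"
proof -
  have "j \<in> V" "finite V" using assms unfolding simple_graph_def by auto
  then have "adj E i j \<le> deg V E i"
    unfolding deg_def by (intro member_le_sum) (auto simp: adj_nonneg)
  then show ?thesis using assms(2) by (simp add: adj_def)
qed

lemma vol_nonneg: "vol V E S \<ge> 0"
  unfolding vol_def by (simp add: sum_nonneg deg_nonneg)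

lemma norm_adj_nonneg: "norm_adj V E i j \<ge> 0"
  unfolding norm_adj_def by (simp add: adj_nonneg deg_nonneg)

lemma modmat_eq_norm_adj:
  "modmat V E i j = norm_adj V E i j - sqrt (deg V E i) * sqrt (deg V E j) / vol V E V"
  unfolding modmat_def norm_adj_def ..

lemma modmat_sym: "simple_graph V E \<Longrightarrow> modmat V E i j = modmat V E j i"
  unfolding modmat_def using adj_sym[of V E i j] by (simp add: mult.commute)

lemma norm_adj_mult_sqrt_deg:
  assumes "simple_graph V E"
  shows "norm_adj V E j i * sqrt (deg V E i) = adj E j i / sqrt (deg V E j)"
proof (cases "E j i")
  case True
  then have "deg V E i \<ge> 1" "deg V E j \<ge> 1"
    using assms deg_ge_1 unfolding simple_graph_def by metis+
  then show ?thesis unfolding norm_adj_def by (simp add: field_simps)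
qed (simp add: norm_adj_def adj_def)

lemma modmat_sqrt_deg_null:
  assumes g: "simple_graph V E" and j: "j \<in> V"
  shows "(\<Sum>i\<in>V. modmat V E j i * sqrt (deg V E i)) = 0"
proof -
  have sq: "sqrt (deg V E i) * sqrt (deg V E i) = deg V E i" for i
    using deg_nonneg[of V E i] by simp
  have "(\<Sum>i\<in>V. modmat V E j i * sqrt (deg V E i))
      = (\<Sum>i\<in>V. adj E j i / sqrt (deg V E j) - sqrt (deg V E j) * deg V E i / vol V E V)"
    unfolding modmat_eq_norm_adj left_diff_distrib norm_adj_mult_sqrt_deg[OF g]
    by (simp add: sq mult.assoc deg_nonneg)
  also have "\<dots> = deg V E j / sqrt (deg V E j) - sqrt (deg V E j) * vol V E V / vol V E V"
    by (simp add: sum_subtractf sum_divide_distrib sum_distrib_left deg_def vol_def)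
  also have "\<dots> = 0"
  proof (cases "deg V E j = 0")
    case False
    have "deg V E j \<le> vol V E V"
      unfolding vol_def using g j
      by (intro member_le_sum) (auto simp: deg_nonneg simple_graph_def)
    then have "vol V E V \<noteq> 0" using False deg_nonneg[of V E j] by linarith
    then show ?thesis using real_div_sqrt[OF deg_nonneg[of V E j]] by simp
  qed simp
  finally show ?thesis .
qed

lemma modmat_eigenvector_orthogonal_sqrt_deg:
  assumes g: "simple_graph V E"
    and eig: "\<forall>i\<in>V. (\<Sum>j\<in>V. modmat V E i j * v j) = \<mu> * v i"
    and "\<mu> \<noteq> 0"
  shows "(\<Sum>i\<in>V. sqrt (deg V E i) * v i) = 0"
proof -
  have "\<mu> * (\<Sum>i\<in>V. sqrt (deg V E i) * v i)
      = (\<Sum>i\<in>V. sqrt (deg V E i) * (\<Sum>j\<in>V. modmat V E i j * v j))"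
    using eig by (simp add: sum_distrib_left algebra_simps)
  also have "\<dots> = (\<Sum>i\<in>V. \<Sum>j\<in>V. sqrt (deg V E i) * modmat V E i j * v j)"
    by (simp add: sum_distrib_left mult.assoc)
  also have "\<dots> = (\<Sum>j\<in>V. v j * (\<Sum>i\<in>V. modmat V E j i * sqrt (deg V E i)))"
    by (subst sum.swap) (simp add: modmat_sym[OF g] sum_distrib_left algebra_simps)
  also have "\<dots> = 0" using modmat_sqrt_deg_null[OF g] by simp
  finally show ?thesis using \<open>\<mu> \<noteq> 0\<close> by simp
qed

lemma modmat_eigenvector_norm_adj:
  assumes g: "simple_graph V E"
    and eig: "\<forall>i\<in>V. (\<Sum>j\<in>V. modmat V E i j * v j) = \<mu> * v i"
    and "\<mu> \<noteq> 0"
  shows "\<forall>i\<in>V. (\<Sum>j\<in>V. norm_adj V E i j * v j) = \<mu> * v i"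
proof
  fix i assume "i \<in> V"
  have "(\<Sum>j\<in>V. modmat V E i j * v j)
      = (\<Sum>j\<in>V. norm_adj V E i j * v j)
        - sqrt (deg V E i) / vol V E V * (\<Sum>j\<in>V. sqrt (deg V E j) * v j)"
    unfolding modmat_eq_norm_adj by (simp add: sum_subtractf sum_distrib_left algebra_simps)
  then show "(\<Sum>j\<in>V. norm_adj V E i j * v j) = \<mu> * v i"
    using eig \<open>i \<in> V\<close> modmat_eigenvector_orthogonal_sqrt_deg[OF assms] by simp
qed

lemma norm_adj_term_le:
  assumes i: "(v i)^2 / deg V E i \<le> m" and j: "(v j)^2 / deg V E j \<le> m"
  shows "norm_adj V E i j * v i * v j \<le> m * adj E i j"
proof (cases "E i j")
  case True
  have m: "m \<ge> 0" using i deg_nonneg[of V E i] by (meson divide_nonneg_nonneg order_trans zero_le_power2)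
  have root: "\<bar>v k\<bar> / sqrt (deg V E k) \<le> sqrt m" if "(v k)^2 / deg V E k \<le> m" for k
    using real_sqrt_le_mono[OF that] by (simp add: real_sqrt_divide)
  have "v i * v j / (sqrt (deg V E i) * sqrt (deg V E j))
      \<le> (\<bar>v i\<bar> / sqrt (deg V E i)) * (\<bar>v j\<bar> / sqrt (deg V E j))"
    by (simp add: abs_mult[symmetric] divide_right_mono deg_nonneg)
  also have "\<dots> \<le> sqrt m * sqrt m"
    using root[OF i] root[OF j] m by (intro mult_mono) (auto simp: deg_nonneg)
  finally show ?thesis using True m by (simp add: norm_adj_def adj_def)
qed (simp add: norm_adj_def adj_def)

lemma norm_adj_eigen_part_le:
  assumes eig: "\<forall>i\<in>V. (\<Sum>j\<in>V. norm_adj V E i j * v j) = \<mu> * v i"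
    and fin: "finite V" and P: "P \<subseteq> V"
    and sign: "\<forall>i\<in>P. \<forall>j\<in>V - P. v i * v j \<le> 0"
    and m: "\<forall>k\<in>V. (v k)^2 / deg V E k \<le> m"
  shows "\<mu> * (\<Sum>i\<in>P. (v i)^2) \<le> m * (\<Sum>i\<in>P. \<Sum>j\<in>P. adj E i j)"
proof -
  let ?t = "\<lambda>i j. norm_adj V E i j * v i * v j"
  have row: "\<mu> * (v i)^2 = (\<Sum>j\<in>V. ?t i j)" if "i \<in> V" for i
  proof -
    have "\<mu> * (v i)^2 = v i * (\<Sum>j\<in>V. norm_adj V E i j * v j)"
      using eig that by (simp add: power2_eq_square)
    then show ?thesis by (simp add: sum_distrib_left algebra_simps)
  qed
  have "\<mu> * (\<Sum>i\<in>P. (v i)^2) = (\<Sum>i\<in>P. \<Sum>j\<in>V. ?t i j)"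
    using row P by (auto simp: sum_distrib_left intro!: sum.cong)
  also have "\<dots> = (\<Sum>i\<in>P. (\<Sum>j\<in>P. ?t i j) + (\<Sum>j\<in>V - P. ?t i j))"
    unfolding sum.subset_diff[OF P fin] by (simp add: add.commute)
  also have "\<dots> \<le> (\<Sum>i\<in>P. \<Sum>j\<in>P. ?t i j)"
  proof (intro sum_mono)
    fix i assume "i \<in> P"
    have "?t i j \<le> 0" if "j \<in> V - P" for j
      using sign \<open>i \<in> P\<close> that norm_adj_nonneg[of V E i j]
      by (simp add: mult.assoc mult_nonneg_nonpos)
    then show "(\<Sum>j\<in>P. ?t i j) + (\<Sum>j\<in>V - P. ?t i j) \<le> (\<Sum>j\<in>P. ?t i j)"
      by (auto intro!: sum_nonpos)
  qed
  also have "\<dots> \<le> (\<Sum>i\<in>P. \<Sum>j\<in>P. m * adj E i j)"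
    using P m by (intro sum_mono norm_adj_term_le) auto
  finally show ?thesis by (simp add: sum_distrib_left)
qed

lemma vol_eq_internal_plus_cut:
  assumes "finite V" "S \<subseteq> V"
  shows "vol V E S = (\<Sum>i\<in>S. \<Sum>j\<in>S. adj E i j) + (\<Sum>i\<in>S. \<Sum>j\<in>V - S. adj E i j)"
  unfolding vol_def deg_def sum.subset_diff[OF assms(2,1)]
  by (simp add: sum.distrib add.commute)

lemma modularity_compl:
  assumes g: "simple_graph V E" and S: "S \<subseteq> V"
  shows "modularity V E (V - S) = modularity V E S"
proof -
  have fin: "finite V" using g by (simp add: simple_graph_def)
  define c where "c = (\<Sum>i\<in>S. \<Sum>j\<in>V - S. adj E i j)"
  have "(\<Sum>i\<in>V - S. \<Sum>j\<in>V - (V - S). adj E i j) = c"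
    unfolding c_def using S by (subst sum.swap) (simp add: double_diff adj_sym[OF g])
  then have x: "vol V E (V - S) = (\<Sum>i\<in>V - S. \<Sum>j\<in>V - S. adj E i j) + c"
    using vol_eq_internal_plus_cut[OF fin, of "V - S" E] by simp
  have y: "vol V E S = (\<Sum>i\<in>S. \<Sum>j\<in>S. adj E i j) + c"
    using vol_eq_internal_plus_cut[OF fin S] by (simp add: c_def)
  have W: "vol V E V = vol V E S + vol V E (V - S)"
    unfolding vol_def sum.subset_diff[OF S fin] by simp
  show ?thesis
  proof (cases "vol V E V = 0")
    case True
    then have "vol V E S = 0" "vol V E (V - S) = 0" using W vol_nonneg by (metis add_nonneg_eq_0_iff)+
    then show ?thesis using x y unfolding modularity_def by simp
  next
    case False
    have "(vol V E S)^2 - (vol V E (V - S))^2 = (vol V E S - vol V E (V - S)) * vol V E V"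
      using W by (simp add: power2_eq_square algebra_simps)
    then have "((vol V E S)^2 - (vol V E (V - S))^2) / vol V E V = vol V E S - vol V E (V - S)"
      using False by simp
    then show ?thesis using x y unfolding modularity_def by (simp add: diff_divide_distrib)
  qed
qed

theorem theorem5p1:
  fixes V :: "'a set" and E :: "'a \<Rightarrow> 'a \<Rightarrow> bool" and v :: "'a \<Rightarrow> real" and \<mu> :: real
  assumes "connected_graph V E"
    and "\<forall>i\<in>V. (\<Sum>j\<in>V. modmat V E i j * v j) = \<mu> * v i"
    and "\<mu> > 0"
    and "sqrt (\<Sum>i\<in>V. (v i)^2) = 1"
    and "S = {i\<in>V. v i \<ge> 0}"
    and "\<mu> > ((vol V E S)^2 + (vol V E (V - S))^2) / vol V E V
              * Max ((\<lambda>i. (v i)^2 / deg V E i) ` V)"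
  shows "modularity V E S > 0"
proof -
  have g: "simple_graph V E" using assms(1) by (simp add: connected_graph_def)
  have fin: "finite V" using g by (simp add: simple_graph_def)
  have S: "S \<subseteq> V" using assms(5) by auto
  define m where "m = Max ((\<lambda>i. (v i)^2 / deg V E i) ` V)"
  define e where "e = (\<lambda>P. \<Sum>i\<in>P. \<Sum>j\<in>P. adj E i j)"
  define K where "K = ((vol V E S)^2 + (vol V E (V - S))^2) / vol V E V"
  have m: "\<forall>k\<in>V. (v k)^2 / deg V E k \<le> m" using fin by (simp add: m_def)
  have eig: "\<forall>i\<in>V. (\<Sum>j\<in>V. norm_adj V E i j * v j) = \<mu> * v i"
    using modmat_eigenvector_norm_adj[OF g assms(2)] assms(3) by simp
  have "\<forall>i\<in>S. \<forall>j\<in>V - S. v i * v j \<le> 0"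
    using assms(5) by (auto simp: mult_nonneg_nonpos)
  then have "\<mu> * (\<Sum>i\<in>S. (v i)^2) \<le> m * e S"
    unfolding e_def using norm_adj_eigen_part_le[OF eig fin S _ m] by blast
  moreover have "\<forall>i\<in>V - S. \<forall>j\<in>V - (V - S). v i * v j \<le> 0"
    using assms(5) by (auto simp: mult_nonpos_nonneg)
  then have "\<mu> * (\<Sum>i\<in>V - S. (v i)^2) \<le> m * e (V - S)"
    unfolding e_def using norm_adj_eigen_part_le[OF eig fin Diff_subset _ m] by blast
  moreover have "(\<Sum>i\<in>S. (v i)^2) + (\<Sum>i\<in>V - S. (v i)^2) = 1"
    using assms(4) sum.subset_diff[OF S fin, of "\<lambda>i. (v i)^2"] by simp
  then have "\<mu> = \<mu> * (\<Sum>i\<in>S. (v i)^2) + \<mu> * (\<Sum>i\<in>V - S. (v i)^2)"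
    by (simp flip: distrib_left)
  ultimately have "\<mu> \<le> m * (e S + e (V - S))"
    unfolding distrib_left by linarith
  then have "m * K < m * (e S + e (V - S))"
    using assms(6) unfolding K_def m_def by (simp add: mult.commute)
  moreover have "m \<ge> 0"
    using m g deg_nonneg unfolding simple_graph_def by (meson divide_nonneg_nonneg ex_in_conv order_trans zero_le_power2)
  ultimately have "K < e S + e (V - S)"
    by (rule mult_left_less_imp_less)
  moreover have "2 * modularity V E S = e S + e (V - S) - K"
    using modularity_compl[OF g S] by (simp add: modularity_def e_def K_def add_divide_distrib)
  ultimately show ?thesis by simp
qed

end
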